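(* Let $p,q\geq2$ be relatively prime integers with $p\geq 2q-1$. Then $|L(p,q)\cap D_{p,q}^n|\leq q^{n+1}$ for every integer $n>0$, where $D_{p,q}^n$ is the set of words of length $n$ over $D_{p,q}$.
   Context: For an integer $n>1$, $A_n=\{0,1,\dots,n-1\}$. For every $d\in A_q$ let $k_d\in A_p$ be the unique element with $k_dq\equiv d\pmod p$, and set $D_{p,q}=\{a\in A_{pq}\mid a\equiv k_d\pmod p\text{ for some }d\in A_q\}$. Define $g_{p,q}:A_{pq}\times A_{pq}\to A_{pq}$ by writing $x=x_1q+x_0$, $y=y_1q+y_0$ with $x_0,y_0\in A_q$, $x_1,y_1\in A_p$ (uniquely), and $g_{p,q}(x,y)=x_0p+y_1$; and $F_{p,q}:A_{pq}^{\mathbb{Z}}\to A_{pq}^{\mathbb{Z}}$ by $F_{p,q}(c)(i)=g_{p,q}(g_{p,q}(c(i-1),c(i)),g_{p,q}(c(i),c(i+1)))$. $F_{p,q}$ is a bijection with inverse $F_{q,p}$ (same formulas with $p,q$ exchanged), so $F_{p,q}^n$ is defined for $n\in\mathbb{Z}$. The trace is $\mathrm{tr}_{p,q}(c)=(F_{p,q}^n(c)(1))_{n\in\mathbb{Z}}$, and $L(p,q)$ is the set of all finite words $u(1)\cdots u(m)$ over $A_{pq}$ such that for some $c\in A_{pq}^{\mathbb{Z}}$ and $n_0\in\mathbb{Z}$, $u(j)=\mathrm{tr}_{p,q}(c)(n_0+j)$ for $1\leq j\leq m$. *)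

theory Defs
  imports "HOL-Number_Theory.Number_Theory"
begin

definition A :: "nat \<Rightarrow> nat set" where
  "A n = {0..<n}"

definition kd :: "nat \<Rightarrow> nat \<Rightarrow> nat \<Rightarrow> nat" where
  "kd p q d = (THE k. k \<in> A p \<and> [k * q = d] (mod p))"

definition D :: "nat \<Rightarrow> nat \<Rightarrow> nat set" where
  "D p q = {a \<in> A (p * q). \<exists>d \<in> A q. [a = kd p q d] (mod p)}"

definition g :: "nat \<Rightarrow> nat \<Rightarrow> nat \<Rightarrow> nat \<Rightarrow> nat" where
  "g p q x y = (x mod q) * p + y div q"

definition F :: "nat \<Rightarrow> nat \<Rightarrow> (int \<Rightarrow> nat) \<Rightarrow> (int \<Rightarrow> nat)" where
  "F p q c = (\<lambda>i. g p q (g p q (c (i - 1)) (c i)) (g p q (c i) (c (i + 1))))"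

definition configs :: "nat \<Rightarrow> (int \<Rightarrow> nat) set" where
  "configs m = {c. \<forall>i. c i \<in> A m}"

text \<open>Integer powers of F_{p,q}; negative powers use the inverse F_{q,p}.\<close>
definition Fpow :: "nat \<Rightarrow> nat \<Rightarrow> int \<Rightarrow> (int \<Rightarrow> nat) \<Rightarrow> (int \<Rightarrow> nat)" where
  "Fpow p q n = (if n \<ge> 0 then (F p q ^^ nat n) else (F q p ^^ nat (- n)))"

definition tr :: "nat \<Rightarrow> nat \<Rightarrow> (int \<Rightarrow> nat) \<Rightarrow> (int \<Rightarrow> nat)" where
  "tr p q c = (\<lambda>n. Fpow p q n c 1)"

definition L :: "nat \<Rightarrow> nat \<Rightarrow> nat list set" where
  "L p q = {u. \<exists>c \<in> configs (p * q). \<exists>n0::int.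
              \<forall>j \<in> {1..length u}. u ! (j - 1) = tr p q c (n0 + int j)}"

definition words :: "nat set \<Rightarrow> nat \<Rightarrow> nat list set" where
  "words S n = {u. length u = n \<and> set u \<subseteq> S}"

end

theory Submission
  imports Defs
begin

text \<open>If x = c(1) and y = F c (1) are consecutive trace letters, then
  y mod p = ((x mod q) p + c(2) div q) div q. When y \<in> D, the residue of (y mod p) q modulo p
  is below q, and for p \<ge> 2q - 1 this pins (y mod p) q into the window
  [(x mod q) p, (x mod q) p + q), so y mod p is determined by x alone. Hence a word of
  L \<inter> D^n is determined by its first letter (at most |D| \<le> q^2 choices) and by the quotients
  of its remaining n - 1 letters by p (q choices each).\<close>

lemma g_less:
  assumes "0 < p" "0 < q" "y < p * q"
  shows "g p q x y < p * q"
proof -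
  have "y div q < p" using assms by (simp add: div_less_iff_less_mult mult.commute)
  moreover have "(x mod q + 1) * p \<le> q * p" using assms by (intro mult_le_mono1) (simp add: Suc_leI)
  ultimately show ?thesis unfolding g_def by (simp add: algebra_simps)
qed

lemma g_swap_inverse:
  assumes "0 < p" "0 < q" "y < p * q" "z < p * q"
  shows "g p q (g q p x y) (g q p y z) = y"
proof -
  have "y div p < q" "z div p < q" using assms by (simp_all add: div_less_iff_less_mult mult.commute)
  then show ?thesis unfolding g_def by simp
qed

lemma F_in_configs:
  assumes "0 < p" "0 < q" "c \<in> configs (p * q)"
  shows "F p q c \<in> configs (p * q)"
  using assms g_less[OF assms(1,2)] by (simp add: configs_def A_def F_def)

lemma F_swap_inverse:
  assumes "0 < p" "0 < q" "c \<in> configs (p * q)"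
  shows "F p q (F q p c) = c"
proof
  fix i
  have c: "\<And>j. c j < q * p" using assms by (simp add: configs_def A_def mult.commute)
  define s where "s j = g q p (c j) (c (j + 1))" for j
  have s: "\<And>j. s j < p * q" unfolding s_def using g_less[OF assms(2,1)] c by (simp add: mult.commute)
  have Fs: "\<And>j. F q p c j = g q p (s (j - 1)) (s j)" unfolding F_def s_def by simp
  have "g p q (F q p c (i - 1)) (F q p c i) = s (i - 1)"
    "g p q (F q p c i) (F q p c (i + 1)) = s i"
    unfolding Fs using g_swap_inverse[OF assms(1,2) s s] by simp_all
  moreover have "g p q (s (i - 1)) (s i) = c i"
    unfolding s_def using g_swap_inverse[OF assms(1,2), of "c i" "c (i + 1)"] c by (simp add: mult.commute)
  ultimately show "F p q (F q p c) i = c i" by (simp add: F_def)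
qed

lemma funpow_F_in_configs:
  assumes "0 < p" "0 < q" "c \<in> configs (p * q)"
  shows "(F p q ^^ m) c \<in> configs (p * q)"
  by (induction m) (simp_all add: assms F_in_configs)

lemma Fpow_in_configs:
  assumes "0 < p" "0 < q" "c \<in> configs (p * q)"
  shows "Fpow p q k c \<in> configs (p * q)"
  using funpow_F_in_configs[OF assms] funpow_F_in_configs[OF assms(2,1)] assms(3)
  by (simp add: Fpow_def mult.commute)

lemma Fpow_add_one:
  assumes "0 < p" "0 < q" "c \<in> configs (p * q)"
  shows "Fpow p q (k + 1) c = F p q (Fpow p q k c)"
proof (cases "k \<ge> 0")
  case True
  then have "nat (k + 1) = Suc (nat k)" by simp
  with True show ?thesis by (simp add: Fpow_def)
next
  case False
  define m where "m = nat (- k - 1)"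
  have "nat (- k) = Suc m" "k = - 1 \<or> nat (- (k + 1)) = m" using False by (auto simp: m_def)
  moreover have "(F q p ^^ m) c \<in> configs (p * q)"
    using funpow_F_in_configs[OF assms(2,1)] assms(3) by (simp add: mult.commute)
  ultimately show ?thesis using False F_swap_inverse[OF assms(1,2)] assms(3) by (auto simp: Fpow_def)
qed

lemma L_consecutive_letters:
  assumes "0 < p" "0 < q" "u \<in> L p q" "Suc j < length u"
  obtains c where "c \<in> configs (p * q)" "u ! j = c 1" "u ! Suc j = F p q c 1"
proof -
  obtain c0 n0 where c0: "c0 \<in> configs (p * q)"
    and u: "\<forall>i \<in> {1..length u}. u ! (i - 1) = tr p q c0 (n0 + int i)"
    using assms(3) unfolding L_def by blast
  define c where "c = Fpow p q (n0 + int (Suc j)) c0"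
  have "c \<in> configs (p * q)" unfolding c_def by (rule Fpow_in_configs[OF assms(1,2) c0])
  moreover have "u ! j = c 1" using u[rule_format, of "Suc j"] assms(4) by (simp add: c_def tr_def)
  moreover have "u ! Suc j = tr p q c0 (n0 + int (Suc j) + 1)"
    using u[rule_format, of "Suc (Suc j)"] assms(4) by (simp add: add.assoc)
  then have "u ! Suc j = F p q c 1" by (simp only: tr_def c_def Fpow_add_one[OF assms(1,2) c0])
  ultimately show ?thesis by (rule that)
qed

lemma kd_less_and_cong:
  assumes "p \<ge> 2" "coprime p q"
  shows "kd p q d < p" "[kd p q d * q = d] (mod p)"
proof -
  have cq: "coprime q p" using assms by (simp add: coprime_commute)
  obtain x where x: "[q * x = 1] (mod p)" using cong_solve_coprime_nat[OF cq] by auto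
  define k where "k = (x * d) mod p"
  have "[k * q = (x * d) * q] (mod p)" by (simp add: k_def cong_def mod_mult_left_eq)
  also have "(x * d) * q = (q * x) * d" by simp
  also have "[(q * x) * d = 1 * d] (mod p)" using x by (intro cong_mult cong_refl)
  finally have kq: "[k * q = d] (mod p)" by simp
  have kp: "k < p" unfolding k_def using assms by simp
  have "\<exists>!k. k \<in> A p \<and> [k * q = d] (mod p)"
  proof
    show "k \<in> A p \<and> [k * q = d] (mod p)" using kq kp by (simp add: A_def)
  next
    fix k' assume k': "k' \<in> A p \<and> [k' * q = d] (mod p)"
    then have "[k' * q = k * q] (mod p)" using kq by (metis cong_sym cong_trans)
    then have "[k' = k] (mod p)" using cq cong_mult_rcancel_nat by blast
    then show "k' = k" using k' kp by (simp add: A_def cong_less_modulus_unique_nat)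
  qed
  then have "kd p q d \<in> A p \<and> [kd p q d * q = d] (mod p)" unfolding kd_def by (rule theI')
  then show "kd p q d < p" "[kd p q d * q = d] (mod p)" by (simp_all add: A_def)
qed

lemma D_mult_mod_less:
  assumes "p \<ge> 2" "coprime p q" "q \<le> p" "a \<in> D p q"
  shows "(a mod p * q) mod p < q"
proof -
  obtain d where d: "d < q" "[a = kd p q d] (mod p)" using assms(4) by (auto simp: D_def A_def)
  have "[a mod p * q = a * q] (mod p)" by (simp add: cong_def mod_mult_left_eq)
  also have "[a * q = kd p q d * q] (mod p)" using d(2) by (simp add: cong_mult)
  also have "[kd p q d * q = d] (mod p)" by (rule kd_less_and_cong[OF assms(1,2)])
  finally show ?thesis using d(1) assms(3) by (simp add: cong_def)
qed

lemma card_D_le: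
  assumes "p \<ge> 2"
  shows "card (D p q) \<le> q * q"
proof -
  define enc where "enc = (\<lambda>(d, t). kd p q d mod p + p * t)"
  have "D p q \<subseteq> enc ` (A q \<times> A q)"
  proof
    fix a assume a: "a \<in> D p q"
    then obtain d where d: "d < q" "[a = kd p q d] (mod p)" by (auto simp: D_def A_def)
    have "a div p < q" using a assms by (simp add: D_def A_def div_less_iff_less_mult mult.commute)
    moreover have "a = enc (d, a div p)"
      using d(2) by (simp add: enc_def cong_def) (metis div_mult_mod_eq add.commute mult.commute)
    ultimately show "a \<in> enc ` (A q \<times> A q)" using d(1) by (auto simp: A_def)
  qed
  then have "card (D p q) \<le> card (enc ` (A q \<times> A q))" by (intro card_mono) (auto simp: A_def)
  also have "\<dots> \<le> card (A q \<times> A q)" by (rule card_image_le) (simp add: A_def)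
  finally show ?thesis by (simp add: A_def card_cartesian_product)
qed

lemma mult_window_if_small_residue:
  fixes m w V p q :: nat
  assumes "2 * q - 1 \<le> p" "m * p \<le> V" "V < m * p + p"
    "w * q \<le> V" "V < w * q + q" "(w * q) mod p < q"
  shows "m * p \<le> w * q \<and> w * q < m * p + q"
proof -
  define r where "r = w * q div p"
  have wq: "w * q = r * p + w * q mod p" by (simp add: r_def)
  have "r * p < Suc m * p" "m * p < Suc r * p" using wq assms by simp_all
  then have "r = m" by (metis Suc_leI le_antisym less_Suc_eq_le mult_less_cancel2)
  then show ?thesis using wq assms by simp
qed

lemma F_residue_window:
  assumes "p \<ge> 2" "q \<ge> 2" "coprime p q" "2 * q - 1 \<le> p"
    "c \<in> configs (p * q)" "F p q c 1 \<in> D p q"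
  shows "c 1 mod q * p \<le> F p q c 1 mod p * q \<and> F p q c 1 mod p * q < c 1 mod q * p + q"
proof -
  define V where "V = g p q (c 1) (c 2)"
  have c2: "c 2 div q < p" using assms by (simp add: configs_def A_def div_less_iff_less_mult)
  have "V < p * q" using assms g_less by (simp add: V_def configs_def A_def)
  then have "F p q c 1 mod p = V div q"
    using assms by (simp add: F_def V_def g_def div_less_iff_less_mult)
  moreover have "(F p q c 1 mod p * q) mod p < q"
    using D_mult_mod_less[OF assms(1,3) _ assms(6)] assms(4) by simp
  moreover have "c 1 mod q * p \<le> V" "V < c 1 mod q * p + p" using c2 by (simp_all add: V_def g_def)
  moreover have "V mod q < q" using assms(2) by simp
  then have "V div q * q \<le> V" "V < V div q * q + q" using div_mult_mod_eq[of V q] by linarith+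
  ultimately show ?thesis using mult_window_if_small_residue[OF assms(4)] by simp
qed

lemma mult_window_unique:
  fixes a x y p q :: nat
  assumes "a * p \<le> x * q" "x * q < a * p + q" "a * p \<le> y * q" "y * q < a * p + q"
  shows "x = y"
proof -
  have "x * q < Suc y * q" "y * q < Suc x * q" using assms by simp_all
  then show ?thesis by (metis le_antisym less_Suc_eq_le mult_less_cancel2)
qed

lemma L_D_word_eqI:
  assumes "p \<ge> 2" "q \<ge> 2" "coprime p q" "2 * q - 1 \<le> p"
    and u: "u \<in> L p q" "set u \<subseteq> D p q" and v: "v \<in> L p q" "set v \<subseteq> D p q"
    and "length u = length v" "hd u = hd v"
    and "map (\<lambda>x. x div p) (tl u) = map (\<lambda>x. x div p) (tl v)"
  shows "u = v"
proof (rule nth_equalityI)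
  have window: "u ! j mod q * p \<le> u ! Suc j mod p * q \<and> u ! Suc j mod p * q < u ! j mod q * p + q"
    if uL: "u \<in> L p q" and uD: "set u \<subseteq> D p q" and j: "Suc j < length u" for u j
  proof -
    obtain c where "c \<in> configs (p * q)" "u ! j = c 1" "u ! Suc j = F p q c 1"
      using L_consecutive_letters[OF _ _ uL j] assms(1,2) by auto
    moreover have "u ! Suc j \<in> D p q" using uD j by (meson nth_mem subsetD)
    ultimately show ?thesis using F_residue_window[OF assms(1-4)] by simp
  qed
  show "u ! j = v ! j" if "j < length u" for j
    using that
  proof (induction j)
    case 0
    then show ?case using assms(9,10) by (metis hd_conv_nth length_greater_0_conv)
  next
    case (Suc j)
    have "u ! Suc j div p = v ! Suc j div p"
      using arg_cong[OF assms(11), of "\<lambda>xs. xs ! j"] Suc.prems assms(9) by (simp add: nth_tl)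
    moreover have "u ! Suc j mod p = v ! Suc j mod p"
      using window[OF u, of j] window[OF v, of j] Suc assms(9)
      by (intro mult_window_unique[where a = "u ! j mod q" and p = p and q = q]) simp_all
    ultimately show ?case by (metis div_mult_mod_eq)
  qed
qed (use assms(9) in simp)

theorem lemma6:
  fixes p q n :: nat
  assumes "p \<ge> 2" and "q \<ge> 2" and "coprime p q" and "p \<ge> 2 * q - 1" and "n > 0"
  shows "card (L p q \<inter> words (D p q) n) \<le> q ^ (n + 1)"
proof -
  define S where "S = L p q \<inter> words (D p q) n"
  define T where "T = D p q \<times> {xs. set xs \<subseteq> {..<q} \<and> length xs = n - 1}"
  define enc where "enc u = (hd u, map (\<lambda>x. x div p) (tl u))" for u :: "nat list"
  have "inj_on enc S"
    using L_D_word_eqI[OF assms(1-4)] by (intro inj_onI) (auto simp: S_def words_def enc_def)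
  moreover have "enc u \<in> T" if "u \<in> S" for u
  proof -
    have u: "length u = n" "set u \<subseteq> D p q" using that by (auto simp: S_def words_def)
    have "\<And>x. x \<in> D p q \<Longrightarrow> x div p < q"
      using assms(1) by (auto simp: D_def A_def div_less_iff_less_mult mult.commute)
    then show ?thesis using u assms(5) by (cases u) (auto simp: enc_def T_def)
  qed
  then have "enc ` S \<subseteq> T" by blast
  moreover have "finite T" unfolding T_def
    by (intro finite_cartesian_product finite_lists_length_eq) (auto simp: D_def A_def)
  ultimately have "card S \<le> card T" by (rule card_inj_on_le)
  also have "card T \<le> q * q * q ^ (n - 1)"
    using card_D_le[OF assms(1)] by (simp add: T_def card_cartesian_product card_lists_length_eq)
  also have "\<dots> = q ^ (n + 1)" using assms(5) by (cases n) simp_all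
  finally show ?thesis by (simp add: S_def)
qed

end
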